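(* Let $\epsilon>0$, $\tilde\ell>0$, $\lambda_0=4$, $\lambda_*=\lambda_0/(4\pi^2)$, and suppose that for a small constant $c>0$ $$\Big|j^2\frac{\epsilon^2}{\tilde\ell^2}-\lambda_*\Big|\ge\frac{c\,\epsilon}{\tilde\ell}\quad\text{for all }j\in\mathbb N.$$ Then for every $d\in L^2(0,2\pi)$ there exists a unique solution $\mathfrak e\in H^2(0,2\pi)$ of $$\epsilon^2\frac{4\pi^2}{\tilde\ell^2}\mathfrak e''+\lambda_0\mathfrak e=d\ \text{ in }(0,2\pi),\qquad \mathfrak e(0)=\mathfrak e(2\pi),\ \mathfrak e'(0)=\mathfrak e'(2\pi),$$ and it satisfies $$\|\mathfrak e\|_{L^\infty(0,2\pi)}^2+\frac{\epsilon^2}{\tilde\ell^2}\|\mathfrak e'\|_{L^2(0,2\pi)}^2+\frac{\epsilon^4}{\tilde\ell^4}\|\mathfrak e''\|_{L^2(0,2\pi)}^2\le C\frac{\tilde\ell^2}{\epsilon^2}\|d\|_{L^2(0,2\pi)}^2$$ for a constant $C$. *)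

theory Defs
  imports "HOL-Analysis.Analysis"
begin

text \<open>Functions on the interval (0, 2 pi), represented as real-valued functions on the reals
  whose values outside [0, 2 pi] are irrelevant.\<close>

definition lambda0 :: real where "lambda0 = 4"
definition lambda_star :: real where "lambda_star = lambda0 / (4 * pi^2)"

definition L2_on :: "(real \<Rightarrow> real) \<Rightarrow> bool" where
  "L2_on f \<longleftrightarrow> f measurable_on {0..2*pi} \<and> (\<lambda>x. (f x)^2) integrable_on {0..2*pi}"

definition L2_norm_sq :: "(real \<Rightarrow> real) \<Rightarrow> real" where
  "L2_norm_sq f = integral {0..2*pi} (\<lambda>x. (f x)^2)"

text \<open>Squared L-infinity norm of a (continuous) function on [0, 2 pi].\<close>
definition Linf_norm_sq :: "(real \<Rightarrow> real) \<Rightarrow> real" where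
  "Linf_norm_sq f = (SUP x\<in>{0..2*pi}. \<bar>f x\<bar>)^2"

text \<open>e is in H2(0, 2 pi) with weak first derivative e1 and weak second derivative e2:
  e2 in L2, e1 is the primitive of e2 and e is the primitive of e1 (on [0, 2 pi]).\<close>
definition H2_derivs :: "(real \<Rightarrow> real) \<Rightarrow> (real \<Rightarrow> real) \<Rightarrow> (real \<Rightarrow> real) \<Rightarrow> bool" where
  "H2_derivs e e1 e2 \<longleftrightarrow> L2_on e2 \<and>
     (\<forall>x\<in>{0..2*pi}. e1 x = e1 0 + integral {0..x} e2 \<and> e x = e 0 + integral {0..x} e1)"

definition periodic_sol ::
  "real \<Rightarrow> real \<Rightarrow> (real \<Rightarrow> real) \<Rightarrow> (real \<Rightarrow> real) \<Rightarrow> (real \<Rightarrow> real) \<Rightarrow> (real \<Rightarrow> real) \<Rightarrow> bool" where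
  "periodic_sol eps l d e e1 e2 \<longleftrightarrow> H2_derivs e e1 e2 \<and>
     (AE x in lebesgue. x \<in> {0<..<2*pi} \<longrightarrow> eps^2 * (4 * pi^2 / l^2) * e2 x + lambda0 * e x = d x) \<and>
     e 0 = e (2*pi) \<and> e1 0 = e1 (2*pi)"

end

theory Submission
  imports Defs
begin

(* With w = l / (pi eps) the problem becomes e'' + w^2 e = (w^2 / 4) d on [0, 2 pi] with periodic
   boundary conditions.  Variation of constants gives a particular solution bounded by the L1 norm of
   the right-hand side, and the periodicity conditions determine the free oscillation
   A cos (w x) + B sin (w x) through a 2x2 system with determinant 2 - 2 cos (2 pi w); the energy
   (e')^2 + w^2 e^2 shows that the periodic solution is unique.  The non-resonance hypothesis keeps
   w^2 at distance c pi w from every square, hence w at a uniform distance from the integers, and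
   so bounds the determinant below by some beta > 0 depending only on c.  The resulting bounds on
   e, e' and e'' = (w^2 / 4) d - w^2 e, with |d|_1^2 <= 2 pi |d|_2^2, give the estimate. *)

section \<open>Primitives of integrable functions\<close>

lemma absolutely_integrable_on_continuous_mult:
  fixes g \<phi> :: "real \<Rightarrow> real"
  assumes "continuous_on {a..b} \<phi>" and "g absolutely_integrable_on {a..b}"
  shows "(\<lambda>x. \<phi> x * g x) absolutely_integrable_on {a..b}"
proof (rule absolutely_integrable_bounded_measurable_product_real)
  show "\<phi> \<in> borel_measurable (lebesgue_on {a..b})"
    using assms(1) by (rule continuous_imp_measurable_on_sets_lebesgue) simp
  show "bounded (\<phi> ` {a..b})"
    using assms(1) by (intro compact_imp_bounded compact_continuous_image) auto
qed (use assms in auto)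

lemma continuous_on_integral_mult:
  fixes f \<phi> :: "real \<Rightarrow> real"
  assumes "continuous_on {a..b} \<phi>" and "f absolutely_integrable_on {a..b}"
  shows "continuous_on {a..b} (\<lambda>x. integral {a..x} (\<lambda>t. \<phi> t * f t))"
  using absolutely_integrable_on_continuous_mult[OF assms]
  by (auto simp: absolutely_integrable_on_def intro!: indefinite_integral_continuous_1)

lemma integral_mult_deviation_le_lipschitz:
  fixes u g :: "real \<Rightarrow> real"
  assumes g: "g absolutely_integrable_on {p..q}" and u: "K-lipschitz_on {p..q} u"
    and z: "z \<in> {p..q}"
  shows "\<bar>u z * integral {p..q} g - integral {p..q} (\<lambda>t. u t * g t)\<bar>
    \<le> K * (q - p) * integral {p..q} (\<lambda>t. \<bar>g t\<bar>)"
proof -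
  have gi: "g integrable_on {p..q}" and agi: "(\<lambda>t. \<bar>g t\<bar>) integrable_on {p..q}"
    using g by (auto simp: absolutely_integrable_on_def)
  have ugi: "(\<lambda>t. u t * g t) integrable_on {p..q}"
    using absolutely_integrable_on_continuous_mult[OF lipschitz_on_continuous_on[OF u] g]
    by (simp add: absolutely_integrable_on_def)
  have "u z * integral {p..q} g - integral {p..q} (\<lambda>t. u t * g t)
      = integral {p..q} (\<lambda>t. (u z - u t) * g t)"
  proof -
    have "integral {p..q} (\<lambda>t. u z * g t - u t * g t)
        = integral {p..q} (\<lambda>t. u z * g t) - integral {p..q} (\<lambda>t. u t * g t)"
      using gi ugi by (intro integral_diff integrable_on_mult_right)
    then show ?thesis by (simp add: left_diff_distrib)
  qed
  also have "\<bar>\<dots>\<bar> \<le> integral {p..q} (\<lambda>t. K * (q - p) * \<bar>g t\<bar>)"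
  proof -
    have "norm (integral {p..q} (\<lambda>t. (u z - u t) * g t)) \<le> integral {p..q} (\<lambda>t. K * (q - p) * \<bar>g t\<bar>)"
    proof (rule integral_norm_bound_integral)
      show "(\<lambda>t. (u z - u t) * g t) integrable_on {p..q}"
        using gi ugi by (simp add: left_diff_distrib integrable_diff integrable_on_mult_right)
      show "(\<lambda>t. K * (q - p) * \<bar>g t\<bar>) integrable_on {p..q}"
        using agi by (rule integrable_on_mult_right)
      fix t assume t: "t \<in> {p..q}"
      have "\<bar>u z - u t\<bar> \<le> K * \<bar>z - t\<bar>"
        using lipschitz_onD[OF u z t] by (simp add: dist_real_def)
      also have "\<dots> \<le> K * (q - p)"
        using z t lipschitz_on_nonneg[OF u] by (intro mult_left_mono) auto
      finally show "norm ((u z - u t) * g t) \<le> K * (q - p) * \<bar>g t\<bar>"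
        by (simp add: abs_mult mult_right_mono)
    qed
    then show ?thesis by simp
  qed
  finally show ?thesis by simp
qed

lemma integral_interval_diff:
  fixes f :: "real \<Rightarrow> 'a::banach"
  assumes f: "f integrable_on {a..b}" and pq: "p \<in> {a..b}" "q \<in> {a..b}" "p \<le> q"
  shows "integral {a..q} f - integral {a..p} f = integral {p..q} f"
proof -
  have "f integrable_on {a..q}"
    using pq by (intro integrable_on_subinterval[OF f]) auto
  then have "integral {a..p} f + integral {p..q} f = integral {a..q} f"
    using Henstock_Kurzweil_Integration.integral_combine[of a p q f] pq by auto
  then show ?thesis
    by (metis add_diff_cancel_left')
qed

lemma integral_mult_primitive_increment_le:
  fixes u g :: "real \<Rightarrow> real"
  assumes g: "g absolutely_integrable_on {a..b}" and u: "K-lipschitz_on {a..b} u"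
    and x: "x \<in> {a..b}" and y: "y \<in> {a..b}"
  shows "\<bar>u x * (integral {a..y} g - integral {a..x} g)
          - (integral {a..y} (\<lambda>t. u t * g t) - integral {a..x} (\<lambda>t. u t * g t))\<bar>
    \<le> K * \<bar>y - x\<bar> * \<bar>integral {a..y} (\<lambda>t. \<bar>g t\<bar>) - integral {a..x} (\<lambda>t. \<bar>g t\<bar>)\<bar>"
proof -
  have gi: "g integrable_on {a..b}" and agi: "(\<lambda>t. \<bar>g t\<bar>) integrable_on {a..b}"
    using g by (auto simp: absolutely_integrable_on_def)
  have ugi: "(\<lambda>t. u t * g t) integrable_on {a..b}"
    using absolutely_integrable_on_continuous_mult[OF lipschitz_on_continuous_on[OF u] g]
    by (simp add: absolutely_integrable_on_def)
  have ordered: "\<bar>u z * (integral {a..q} g - integral {a..p} g)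
          - (integral {a..q} (\<lambda>t. u t * g t) - integral {a..p} (\<lambda>t. u t * g t))\<bar>
      \<le> K * (q - p) * (integral {a..q} (\<lambda>t. \<bar>g t\<bar>) - integral {a..p} (\<lambda>t. \<bar>g t\<bar>))"
    if pq: "p \<in> {a..b}" "q \<in> {a..b}" "p \<le> q" and z: "z \<in> {p, q}" for p q z
    unfolding integral_interval_diff[OF gi pq] integral_interval_diff[OF ugi pq]
      integral_interval_diff[OF agi pq]
  proof (rule integral_mult_deviation_le_lipschitz)
    show "g absolutely_integrable_on {p..q}"
      using g pq by (auto intro: absolutely_integrable_on_subinterval)
    show "K-lipschitz_on {p..q} u"
      using u pq by (auto intro: lipschitz_on_subset)
  qed (use pq z in auto)
  have nonneg: "integral {a..q} (\<lambda>t. \<bar>g t\<bar>) - integral {a..p} (\<lambda>t. \<bar>g t\<bar>) \<ge> 0"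
    if pq: "p \<in> {a..b}" "q \<in> {a..b}" "p \<le> q" for p q
    unfolding integral_interval_diff[OF agi pq]
    using pq by (intro integral_nonneg integrable_on_subinterval[OF agi]) auto
  show ?thesis
  proof (cases "x \<le> y")
    case True
    then show ?thesis
      using ordered[OF x y True, of x] nonneg[OF x y True] by simp
  next
    case False
    then have "y \<le> x" by simp
    then show ?thesis
      using ordered[OF y x _, of x] nonneg[OF y x] by (simp add: abs_minus_commute algebra_simps)
  qed
qed

text \<open>The primitive of \<open>g\<close> need not be differentiable, so the product rule is not available;
  the cross term of the difference quotient is bounded by the previous lemma and vanishes by
  continuity of the primitive of \<open>\<bar>g\<bar>\<close>.\<close>
lemma has_real_derivative_mult_primitive:
  fixes u u' g :: "real \<Rightarrow> real"
  assumes g: "g absolutely_integrable_on {a..b}" and u: "K-lipschitz_on {a..b} u"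
    and du: "(u has_real_derivative u' x) (at x within {a..b})" and x: "x \<in> {a..b}"
  shows "((\<lambda>y. u y * integral {a..y} g - integral {a..y} (\<lambda>t. u t * g t)) has_real_derivative
           u' x * integral {a..x} g) (at x within {a..b})"
proof -
  define G where "G y = integral {a..y} g" for y
  define W where "W y = integral {a..y} (\<lambda>t. u t * g t)" for y
  define J where "J y = integral {a..y} (\<lambda>t. \<bar>g t\<bar>)" for y
  have "continuous_on {a..b} G" "continuous_on {a..b} J"
    using g unfolding G_def J_def absolutely_integrable_on_def
    by (auto intro: indefinite_integral_continuous_1)
  then have G: "(G \<longlongrightarrow> G x) (at x within {a..b})" and J: "(J \<longlongrightarrow> J x) (at x within {a..b})"
    using x by (auto simp: continuous_on_def)
  have "((\<lambda>y. K * \<bar>J y - J x\<bar>) \<longlongrightarrow> K * \<bar>J x - J x\<bar>) (at x within {a..b})"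
    by (intro tendsto_intros J)
  then have "((\<lambda>y. K * \<bar>J y - J x\<bar>) \<longlongrightarrow> 0) (at x within {a..b})"
    by simp
  then have remainder: "((\<lambda>y. (u x * (G y - G x) - (W y - W x)) / (y - x)) \<longlongrightarrow> 0) (at x within {a..b})"
  proof (rule Lim_null_comparison[rotated], unfold eventually_at_filter, intro always_eventually allI impI)
    fix y assume "y \<noteq> x" "y \<in> {a..b}"
    then show "norm ((u x * (G y - G x) - (W y - W x)) / (y - x)) \<le> K * \<bar>J y - J x\<bar>"
      using integral_mult_primitive_increment_le[OF g u x, of y]
      by (simp add: G_def W_def J_def divide_le_eq mult_ac)
  qed
  have "((\<lambda>y. (u y - u x) / (y - x) * G y + (u x * (G y - G x) - (W y - W x)) / (y - x))
      \<longlongrightarrow> u' x * G x + 0) (at x within {a..b})"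
    using du unfolding has_field_derivative_iff by (intro tendsto_intros G remainder)
  moreover have "(\<lambda>y. (u y - u x) / (y - x) * G y + (u x * (G y - G x) - (W y - W x)) / (y - x))
      = (\<lambda>y. ((u y * G y - W y) - (u x * G x - W x)) / (y - x))"
    by (rule ext) (simp add: add_divide_distrib[symmetric] algebra_simps)
  ultimately show ?thesis
    unfolding has_field_derivative_iff G_def[symmetric] W_def[symmetric] by simp
qed

lemma integral_mult_primitive_by_parts:
  fixes u u' g :: "real \<Rightarrow> real"
  assumes g: "g absolutely_integrable_on {a..b}" and u: "K-lipschitz_on {a..b} u"
    and du: "\<And>t. t \<in> {a..b} \<Longrightarrow> (u has_real_derivative u' t) (at t within {a..b})"
    and x: "x \<in> {a..b}"
  shows "integral {a..x} (\<lambda>t. u t * g t)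
    = u x * integral {a..x} g - integral {a..x} (\<lambda>t. u' t * integral {a..t} g)"
proof -
  have "((\<lambda>t. u' t * integral {a..t} g) has_integral
      (u x * integral {a..x} g - integral {a..x} (\<lambda>t. u t * g t))
      - (u a * integral {a..a} g - integral {a..a} (\<lambda>t. u t * g t))) {a..x}"
  proof (rule fundamental_theorem_of_calculus)
    fix y assume y: "y \<in> {a..x}"
    then have y': "y \<in> {a..b}" using x by auto
    from has_real_derivative_mult_primitive[where x=y and u'=u', OF g u du[OF y'] y']
    show "((\<lambda>y. u y * integral {a..y} g - integral {a..y} (\<lambda>t. u t * g t)) has_vector_derivative
        u' y * integral {a..y} g) (at y within {a..x})"
      unfolding has_real_derivative_iff_has_vector_derivative[symmetric]
      by (rule has_field_derivative_subset) (use x in auto)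
  qed (use x in auto)
  then show ?thesis by (simp add: integral_unique)
qed

lemma continuous_on_primitive:
  fixes f g :: "real \<Rightarrow> real"
  assumes g: "g integrable_on {a..b}" and f: "\<And>x. x \<in> {a..b} \<Longrightarrow> f x = c + integral {a..x} g"
  shows "continuous_on {a..b} f"
proof (rule continuous_on_eq)
  show "continuous_on {a..b} (\<lambda>x. c + integral {a..x} g)"
    by (intro continuous_intros indefinite_integral_continuous_1 g)
qed (simp add: f)

lemma has_real_derivative_primitive_within:
  fixes g g' :: "real \<Rightarrow> real"
  assumes g': "continuous_on {a..b} g'" and g: "\<And>y. y \<in> {a..b} \<Longrightarrow> g y = c + integral {a..y} g'"
    and x: "x \<in> {a..b}"
  shows "(g has_real_derivative g' x) (at x within {a..b})"
proof -
  have "((\<lambda>y. c + integral {a..y} g') has_real_derivative g' x) (at x within {a..b})"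
    using integral_has_vector_derivative[OF g' x]
    by (auto simp: has_real_derivative_iff_has_vector_derivative intro!: derivative_eq_intros)
  then show ?thesis
    by (rule has_field_derivative_transform_within[where d = 1]) (use x g in auto)
qed

lemma lipschitz_on_sin_scaled: "\<bar>w\<bar>-lipschitz_on S (\<lambda>t. sin (w * t))"
proof (rule lipschitz_onI)
  fix y t
  have "\<bar>sin (w * y) - sin (w * t)\<bar> = 2 * \<bar>sin ((w * y - w * t) / 2)\<bar> * \<bar>cos ((w * y + w * t) / 2)\<bar>"
    by (simp add: sin_diff_sin abs_mult)
  also have "\<dots> \<le> 2 * \<bar>(w * y - w * t) / 2\<bar> * 1"
    by (intro mult_mono abs_sin_x_le_abs_x abs_cos_le_one) auto
  finally show "dist (sin (w * y)) (sin (w * t)) \<le> \<bar>w\<bar> * dist y t"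
    by (simp add: dist_real_def abs_mult flip: right_diff_distrib)
qed simp

lemma lipschitz_on_cos_scaled: "\<bar>w\<bar>-lipschitz_on S (\<lambda>t. cos (w * t))"
proof (rule lipschitz_onI)
  fix y t
  have "\<bar>cos (w * y) - cos (w * t)\<bar> = 2 * \<bar>sin ((w * y + w * t) / 2)\<bar> * \<bar>sin ((w * t - w * y) / 2)\<bar>"
    by (simp add: cos_diff_cos abs_mult)
  also have "\<dots> \<le> 2 * 1 * \<bar>(w * t - w * y) / 2\<bar>"
    by (intro mult_mono abs_sin_x_le_abs_x abs_sin_le_one) auto
  finally show "dist (cos (w * y)) (cos (w * t)) \<le> \<bar>w\<bar> * dist y t"
    by (simp add: dist_real_def abs_mult abs_minus_commute flip: right_diff_distrib)
qed simp

lemma integral_sin_mult_primitive: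
  fixes g :: "real \<Rightarrow> real"
  assumes g: "g absolutely_integrable_on {a..b}" and x: "x \<in> {a..b}"
  shows "integral {a..x} (\<lambda>t. sin (w * t) * g t)
    = sin (w * x) * integral {a..x} g - w * integral {a..x} (\<lambda>t. cos (w * t) * integral {a..t} g)"
proof -
  have "((\<lambda>t. sin (w * t)) has_real_derivative w * cos (w * t)) (at t within {a..b})" for t
    by (auto intro!: derivative_eq_intros)
  from integral_mult_primitive_by_parts[OF g lipschitz_on_sin_scaled this x]
  show ?thesis by (simp add: mult.assoc)
qed

lemma integral_cos_mult_primitive:
  fixes g :: "real \<Rightarrow> real"
  assumes g: "g absolutely_integrable_on {a..b}" and x: "x \<in> {a..b}"
  shows "integral {a..x} (\<lambda>t. cos (w * t) * g t)
    = cos (w * x) * integral {a..x} g + w * integral {a..x} (\<lambda>t. sin (w * t) * integral {a..t} g)"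
proof -
  have "((\<lambda>t. cos (w * t)) has_real_derivative - w * sin (w * t)) (at t within {a..b})" for t
    by (auto intro!: derivative_eq_intros)
  from integral_mult_primitive_by_parts[OF g lipschitz_on_cos_scaled this x]
  show ?thesis by (simp add: mult.assoc)
qed

section \<open>The forced harmonic oscillator\<close>

text \<open>Integrated form of \<open>e'' + w\<^sup>2 e = f\<close> on \<open>[0, T]\<close>, where \<open>e1\<close> plays the role of \<open>e'\<close>.\<close>
definition oscillator_sol ::
  "real \<Rightarrow> real \<Rightarrow> (real \<Rightarrow> real) \<Rightarrow> (real \<Rightarrow> real) \<Rightarrow> (real \<Rightarrow> real) \<Rightarrow> bool" where
  "oscillator_sol T w f e e1 \<longleftrightarrow>
     continuous_on {0..T} e \<and> continuous_on {0..T} e1 \<and>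
     (\<forall>x\<in>{0..T}. e x = e 0 + integral {0..x} e1 \<and>
                 e1 x = e1 0 + integral {0..x} (\<lambda>t. f t - w\<^sup>2 * e t))"

lemma oscillator_solD:
  assumes "oscillator_sol T w f e e1"
  shows "continuous_on {0..T} e" "continuous_on {0..T} e1"
    and "x \<in> {0..T} \<Longrightarrow> e x = e 0 + integral {0..x} e1"
    and "x \<in> {0..T} \<Longrightarrow> e1 x = e1 0 + integral {0..x} (\<lambda>t. f t - w\<^sup>2 * e t)"
  using assms unfolding oscillator_sol_def by blast+

lemma oscillator_sol_add:
  assumes e: "oscillator_sol T w f e e1" and h: "oscillator_sol T w g h h1"
    and f: "f integrable_on {0..T}" and g: "g integrable_on {0..T}"
  shows "oscillator_sol T w (\<lambda>t. f t + g t) (\<lambda>t. e t + h t) (\<lambda>t. e1 t + h1 t)"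
  unfolding oscillator_sol_def
proof (intro conjI ballI)
  note e' = oscillator_solD[OF e] and h' = oscillator_solD[OF h]
  show "continuous_on {0..T} (\<lambda>t. e t + h t)" "continuous_on {0..T} (\<lambda>t. e1 t + h1 t)"
    by (intro continuous_intros e'(1,2) h'(1,2))+
  fix x assume x: "x \<in> {0..T}"
  then have sub: "{0..x} \<subseteq> {0..T}" by auto
  have cont: "continuous_on {0..x} k" if "continuous_on {0..T} k" for k :: "real \<Rightarrow> real"
    using that sub by (rule continuous_on_subset)
  have "integral {0..x} (\<lambda>t. e1 t + h1 t) = integral {0..x} e1 + integral {0..x} h1"
    by (intro integral_add integrable_continuous_interval cont e'(2) h'(2))
  then show "e x + h x = e 0 + h 0 + integral {0..x} (\<lambda>t. e1 t + h1 t)"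
    using e'(3)[OF x] h'(3)[OF x] by linarith
  have "integral {0..x} (\<lambda>t. f t + g t - w\<^sup>2 * (e t + h t))
      = integral {0..x} (\<lambda>t. (f t - w\<^sup>2 * e t) + (g t - w\<^sup>2 * h t))"
    by (simp add: algebra_simps)
  also have "\<dots> = integral {0..x} (\<lambda>t. f t - w\<^sup>2 * e t) + integral {0..x} (\<lambda>t. g t - w\<^sup>2 * h t)"
  proof (intro integral_add integrable_diff integrable_on_mult_right)
    show "f integrable_on {0..x}" "g integrable_on {0..x}"
      using f g sub by (auto intro: integrable_on_subinterval)
    show "e integrable_on {0..x}" "h integrable_on {0..x}"
      by (intro integrable_continuous_interval cont e'(1) h'(1))+
  qed
  finally show "e1 x + h1 x = e1 0 + h1 0 + integral {0..x} (\<lambda>t. f t + g t - w\<^sup>2 * (e t + h t))"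
    using e'(4)[OF x] h'(4)[OF x] by linarith
qed

lemma oscillator_sol_uminus:
  assumes e: "oscillator_sol T w f e e1" and f: "f integrable_on {0..T}"
  shows "oscillator_sol T w (\<lambda>t. - f t) (\<lambda>t. - e t) (\<lambda>t. - e1 t)"
  unfolding oscillator_sol_def
proof (intro conjI ballI)
  note e' = oscillator_solD[OF e]
  show "continuous_on {0..T} (\<lambda>t. - e t)" "continuous_on {0..T} (\<lambda>t. - e1 t)"
    by (intro continuous_intros e'(1,2))+
  fix x assume x: "x \<in> {0..T}"
  show "- e x = - e 0 + integral {0..x} (\<lambda>t. - e1 t)"
    using e'(3)[OF x] by simp
  have "integral {0..x} (\<lambda>t. - f t - w\<^sup>2 * - e t) = integral {0..x} (\<lambda>t. - (f t - w\<^sup>2 * e t))"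
    by (rule arg_cong[where f = "integral {0..x}"]) (simp add: fun_eq_iff algebra_simps)
  also have "\<dots> = - integral {0..x} (\<lambda>t. f t - w\<^sup>2 * e t)"
    by (rule integral_neg)
  finally have "integral {0..x} (\<lambda>t. - f t - w\<^sup>2 * - e t) = - integral {0..x} (\<lambda>t. f t - w\<^sup>2 * e t)" .
  then show "- e1 x = - e1 0 + integral {0..x} (\<lambda>t. - f t - w\<^sup>2 * - e t)"
    using e'(4)[OF x] by linarith
qed

lemma oscillator_sol_diff:
  assumes e: "oscillator_sol T w f e e1" and h: "oscillator_sol T w g h h1"
    and f: "f integrable_on {0..T}" and g: "g integrable_on {0..T}"
  shows "oscillator_sol T w (\<lambda>t. f t - g t) (\<lambda>t. e t - h t) (\<lambda>t. e1 t - h1 t)"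
  using oscillator_sol_add[OF e oscillator_sol_uminus[OF h g] f integrable_neg[OF g]] by simp

lemma oscillator_sol_cos_sin:
  "oscillator_sol T w (\<lambda>_. 0) (\<lambda>x. A * cos (w * x) + B * sin (w * x))
     (\<lambda>x. w * (B * cos (w * x) - A * sin (w * x)))"
  unfolding oscillator_sol_def
proof (intro conjI ballI)
  show "continuous_on {0..T} (\<lambda>x. A * cos (w * x) + B * sin (w * x))"
    "continuous_on {0..T} (\<lambda>x. w * (B * cos (w * x) - A * sin (w * x)))"
    by (intro continuous_intros)+
  have ftc: "integral {0..x} F' = F x - F 0"
    if "\<And>t. (F has_real_derivative F' t) (at t)" "x \<in> {0..T}" for F F' :: "real \<Rightarrow> real" and x
    using that by (intro integral_unique fundamental_theorem_of_calculus)
      (auto simp: has_real_derivative_iff_has_vector_derivative[symmetric]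
        intro: has_field_derivative_at_within)
  fix x assume x: "x \<in> {0..T}"
  have "((\<lambda>x. A * cos (w * x) + B * sin (w * x)) has_real_derivative
      w * (B * cos (w * t) - A * sin (w * t))) (at t)" for t
    by (auto intro!: derivative_eq_intros simp: algebra_simps)
  from ftc[OF this x]
  show "A * cos (w * x) + B * sin (w * x)
    = A * cos (w * 0) + B * sin (w * 0) + integral {0..x} (\<lambda>x. w * (B * cos (w * x) - A * sin (w * x)))"
    by simp
  have "((\<lambda>x. w * (B * cos (w * x) - A * sin (w * x))) has_real_derivative
      0 - w\<^sup>2 * (A * cos (w * t) + B * sin (w * t))) (at t)" for t
    by (auto intro!: derivative_eq_intros simp: algebra_simps power2_eq_square)
  from ftc[OF this x]
  show "w * (B * cos (w * x) - A * sin (w * x)) = w * (B * cos (w * 0) - A * sin (w * 0))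
    + integral {0..x} (\<lambda>t. 0 - w\<^sup>2 * (A * cos (w * t) + B * sin (w * t)))"
    by simp
qed

lemma sin_mult_primitive_diff_cos_mult_primitive:
  fixes f :: "real \<Rightarrow> real" and w :: real
  assumes f: "f absolutely_integrable_on {0..T}" and x: "x \<in> {0..T}"
  defines "S \<equiv> \<lambda>x. integral {0..x} (\<lambda>t. cos (w * t) * f t)"
    and "C \<equiv> \<lambda>x. integral {0..x} (\<lambda>t. sin (w * t) * f t)"
  shows "sin (w * x) * S x - cos (w * x) * C x
    = w * integral {0..x} (\<lambda>t. cos (w * t) * S t + sin (w * t) * C t)"
proof -
  have cf: "(\<lambda>t. cos (w * t) * f t) absolutely_integrable_on {0..T}"
    and sf: "(\<lambda>t. sin (w * t) * f t) absolutely_integrable_on {0..T}"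
    by (intro absolutely_integrable_on_continuous_mult f continuous_intros)+
  have "continuous_on {0..T} S" "continuous_on {0..T} C"
    unfolding S_def C_def by (intro continuous_on_integral_mult f continuous_intros)+
  then have "continuous_on {0..x} S" "continuous_on {0..x} C"
    using x by (auto elim!: continuous_on_subset)
  then have "integral {0..x} (\<lambda>t. cos (w * t) * S t + sin (w * t) * C t)
      = integral {0..x} (\<lambda>t. cos (w * t) * S t) + integral {0..x} (\<lambda>t. sin (w * t) * C t)"
    by (intro integral_add integrable_continuous_interval continuous_intros)
  moreover have "integral {0..x} (\<lambda>t. sin (w * t) * (cos (w * t) * f t))
      = sin (w * x) * S x - w * integral {0..x} (\<lambda>t. cos (w * t) * S t)"
    using integral_sin_mult_primitive[OF cf x] by (simp add: S_def)
  moreover have "integral {0..x} (\<lambda>t. cos (w * t) * (sin (w * t) * f t))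
      = cos (w * x) * C x + w * integral {0..x} (\<lambda>t. sin (w * t) * C t)"
    using integral_cos_mult_primitive[OF sf x] by (simp add: C_def)
  moreover have "integral {0..x} (\<lambda>t. sin (w * t) * (cos (w * t) * f t))
      = integral {0..x} (\<lambda>t. cos (w * t) * (sin (w * t) * f t))"
    by (simp add: mult.left_commute)
  ultimately show ?thesis
    by (simp add: algebra_simps)
qed

lemma cos_mult_primitive_add_sin_mult_primitive:
  fixes f :: "real \<Rightarrow> real" and w :: real
  assumes f: "f absolutely_integrable_on {0..T}" and x: "x \<in> {0..T}"
  defines "S \<equiv> \<lambda>x. integral {0..x} (\<lambda>t. cos (w * t) * f t)"
    and "C \<equiv> \<lambda>x. integral {0..x} (\<lambda>t. sin (w * t) * f t)"
  shows "cos (w * x) * S x + sin (w * x) * C x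
    = integral {0..x} f - w * integral {0..x} (\<lambda>t. sin (w * t) * S t - cos (w * t) * C t)"
proof -
  have cf: "(\<lambda>t. cos (w * t) * f t) absolutely_integrable_on {0..T}"
    and sf: "(\<lambda>t. sin (w * t) * f t) absolutely_integrable_on {0..T}"
    by (intro absolutely_integrable_on_continuous_mult f continuous_intros)+
  have "continuous_on {0..T} S" "continuous_on {0..T} C"
    unfolding S_def C_def by (intro continuous_on_integral_mult f continuous_intros)+
  then have SC: "continuous_on {0..x} S" "continuous_on {0..x} C"
    using x by (auto elim!: continuous_on_subset)
  have "(\<lambda>t. sin (w * t) * S t) integrable_on {0..x}" "(\<lambda>t. cos (w * t) * C t) integrable_on {0..x}"
    by (intro integrable_continuous_interval continuous_intros SC)+
  then have "w * integral {0..x} (\<lambda>t. sin (w * t) * S t - cos (w * t) * C t)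
      = w * integral {0..x} (\<lambda>t. sin (w * t) * S t) - w * integral {0..x} (\<lambda>t. cos (w * t) * C t)"
    by (simp add: integral_diff right_diff_distrib)
  moreover have "integral {0..x} (\<lambda>t. cos (w * t) * (cos (w * t) * f t))
      = cos (w * x) * S x + w * integral {0..x} (\<lambda>t. sin (w * t) * S t)"
    using integral_cos_mult_primitive[OF cf x] by (simp add: S_def)
  moreover have "integral {0..x} (\<lambda>t. sin (w * t) * (sin (w * t) * f t))
      = sin (w * x) * C x - w * integral {0..x} (\<lambda>t. cos (w * t) * C t)"
    using integral_sin_mult_primitive[OF sf x] by (simp add: C_def)
  moreover have "integral {0..x} f
      = integral {0..x} (\<lambda>t. cos (w * t) * (cos (w * t) * f t))
        + integral {0..x} (\<lambda>t. sin (w * t) * (sin (w * t) * f t))"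
  proof -
    have "cos (w * t) * (cos (w * t) * f t) + sin (w * t) * (sin (w * t) * f t)
        = ((sin (w * t))\<^sup>2 + (cos (w * t))\<^sup>2) * f t" for t
      by (simp only: power2_eq_square algebra_simps)
    then have "integral {0..x} f
        = integral {0..x} (\<lambda>t. cos (w * t) * (cos (w * t) * f t) + sin (w * t) * (sin (w * t) * f t))"
      by simp
    also have "\<dots> = integral {0..x} (\<lambda>t. cos (w * t) * (cos (w * t) * f t))
        + integral {0..x} (\<lambda>t. sin (w * t) * (sin (w * t) * f t))"
    proof (intro integral_add)
      have "(\<lambda>t. cos (w * t) * (cos (w * t) * f t)) absolutely_integrable_on {0..T}"
        "(\<lambda>t. sin (w * t) * (sin (w * t) * f t)) absolutely_integrable_on {0..T}"
        by (intro absolutely_integrable_on_continuous_mult cf sf continuous_intros)+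
      then show "(\<lambda>t. cos (w * t) * (cos (w * t) * f t)) integrable_on {0..x}"
        "(\<lambda>t. sin (w * t) * (sin (w * t) * f t)) integrable_on {0..x}"
        using x by (auto simp: absolutely_integrable_on_def intro: integrable_on_subinterval)
    qed
    finally show ?thesis .
  qed
  ultimately show ?thesis
    by linarith
qed

text \<open>The particular solution is \<open>(1/w) \<integral>\<^sub>0\<^sup>x sin (w (x - t)) f t dt\<close> with the sine expanded.\<close>
lemma oscillator_sol_variation_of_constants:
  fixes f :: "real \<Rightarrow> real"
  assumes f: "f absolutely_integrable_on {0..T}" and w: "w \<noteq> 0"
  shows "oscillator_sol T w f
    (\<lambda>x. (sin (w * x) * integral {0..x} (\<lambda>t. cos (w * t) * f t)
          - cos (w * x) * integral {0..x} (\<lambda>t. sin (w * t) * f t)) / w)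
    (\<lambda>x. cos (w * x) * integral {0..x} (\<lambda>t. cos (w * t) * f t)
          + sin (w * x) * integral {0..x} (\<lambda>t. sin (w * t) * f t))"
proof -
  define S where "S x = integral {0..x} (\<lambda>t. cos (w * t) * f t)" for x
  define C where "C x = integral {0..x} (\<lambda>t. sin (w * t) * f t)" for x
  have SC: "continuous_on {0..T} S" "continuous_on {0..T} C"
    unfolding S_def C_def by (intro continuous_on_integral_mult f continuous_intros)+
  have p: "(sin (w * x) * S x - cos (w * x) * C x) / w
      = integral {0..x} (\<lambda>t. cos (w * t) * S t + sin (w * t) * C t)" if x: "x \<in> {0..T}" for x
    using sin_mult_primitive_diff_cos_mult_primitive[OF f x, of w, folded S_def C_def] w by simp
  have p1: "cos (w * x) * S x + sin (w * x) * C x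
      = integral {0..x} (\<lambda>t. f t - w\<^sup>2 * ((sin (w * t) * S t - cos (w * t) * C t) / w))"
    if x: "x \<in> {0..T}" for x
  proof -
    have "continuous_on {0..x} S" "continuous_on {0..x} C"
      using SC x by (auto elim!: continuous_on_subset)
    then have "(\<lambda>t. sin (w * t) * S t - cos (w * t) * C t) integrable_on {0..x}"
      by (intro integrable_continuous_interval continuous_intros)
    moreover have "f integrable_on {0..x}"
      using f x by (auto simp: absolutely_integrable_on_def intro: integrable_on_subinterval)
    ultimately have "integral {0..x} (\<lambda>t. f t - w * (sin (w * t) * S t - cos (w * t) * C t))
        = integral {0..x} f - w * integral {0..x} (\<lambda>t. sin (w * t) * S t - cos (w * t) * C t)"
      by (simp add: integral_diff integrable_on_mult_right)
    moreover have "(\<lambda>t. f t - w\<^sup>2 * ((sin (w * t) * S t - cos (w * t) * C t) / w))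
        = (\<lambda>t. f t - w * (sin (w * t) * S t - cos (w * t) * C t))"
      using w by (simp add: fun_eq_iff power2_eq_square)
    ultimately show ?thesis
      using cos_mult_primitive_add_sin_mult_primitive[OF f x, of w, folded S_def C_def] by simp
  qed
  have S0: "S 0 = 0" "C 0 = 0" by (simp_all add: S_def C_def)
  show ?thesis
    unfolding oscillator_sol_def S_def[symmetric] C_def[symmetric]
  proof (intro conjI ballI)
    show "continuous_on {0..T} (\<lambda>x. (sin (w * x) * S x - cos (w * x) * C x) / w)"
      "continuous_on {0..T} (\<lambda>x. cos (w * x) * S x + sin (w * x) * C x)"
      using SC w by (intro continuous_intros; simp)+
    fix x assume x: "x \<in> {0..T}"
    show "(sin (w * x) * S x - cos (w * x) * C x) / w = (sin (w * 0) * S 0 - cos (w * 0) * C 0) / w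
        + integral {0..x} (\<lambda>t. cos (w * t) * S t + sin (w * t) * C t)"
      using p[OF x] S0 by simp
    show "cos (w * x) * S x + sin (w * x) * C x = cos (w * 0) * S 0 + sin (w * 0) * C 0
        + integral {0..x} (\<lambda>t. f t - w\<^sup>2 * ((sin (w * t) * S t - cos (w * t) * C t) / w))"
      using p1[OF x] S0 by simp
  qed
qed

lemma abs_integral_mult_le_L1:
  fixes f \<phi> :: "real \<Rightarrow> real"
  assumes f: "f absolutely_integrable_on {a..b}" and \<phi>: "continuous_on {a..b} \<phi>"
    and bounded: "\<And>t. \<bar>\<phi> t\<bar> \<le> 1" and x: "x \<in> {a..b}"
  shows "\<bar>integral {a..x} (\<lambda>t. \<phi> t * f t)\<bar> \<le> integral {a..b} (\<lambda>t. \<bar>f t\<bar>)"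
proof -
  have sub: "{a..x} \<subseteq> {a..b}" using x by auto
  have af: "(\<lambda>t. \<bar>f t\<bar>) integrable_on {a..b}"
    using f by (simp add: absolutely_integrable_on_def)
  have "(\<lambda>t. \<phi> t * f t) integrable_on {a..x}"
    using absolutely_integrable_on_continuous_mult[OF \<phi> f] sub
    by (auto simp: absolutely_integrable_on_def intro: integrable_on_subinterval)
  then have "norm (integral {a..x} (\<lambda>t. \<phi> t * f t)) \<le> integral {a..x} (\<lambda>t. \<bar>f t\<bar>)"
    using integrable_on_subinterval[OF af sub]
    by (rule integral_norm_bound_integral) (simp add: abs_mult mult_left_le_one_le bounded)
  also have "\<dots> \<le> integral {a..b} (\<lambda>t. \<bar>f t\<bar>)"
    using integrable_on_subinterval[OF af sub] af sub by (intro integral_subset_le) auto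
  finally show ?thesis by simp
qed

lemma oscillator_sol_particular:
  fixes f :: "real \<Rightarrow> real"
  assumes f: "f absolutely_integrable_on {0..T}" and w: "w \<noteq> 0"
  obtains p p1 where "oscillator_sol T w f p p1" "p 0 = 0" "p1 0 = 0"
    "\<And>x. x \<in> {0..T} \<Longrightarrow> \<bar>w * p x\<bar> \<le> 2 * integral {0..T} (\<lambda>t. \<bar>f t\<bar>)"
    "\<And>x. x \<in> {0..T} \<Longrightarrow> \<bar>p1 x\<bar> \<le> 2 * integral {0..T} (\<lambda>t. \<bar>f t\<bar>)"
proof
  define S where "S x = integral {0..x} (\<lambda>t. cos (w * t) * f t)" for x
  define C where "C x = integral {0..x} (\<lambda>t. sin (w * t) * f t)" for x
  define \<sigma> where "\<sigma> = integral {0..T} (\<lambda>t. \<bar>f t\<bar>)"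
  show "oscillator_sol T w f (\<lambda>x. (sin (w * x) * S x - cos (w * x) * C x) / w)
      (\<lambda>x. cos (w * x) * S x + sin (w * x) * C x)"
    unfolding S_def C_def by (rule oscillator_sol_variation_of_constants[OF f w])
  show "(sin (w * 0) * S 0 - cos (w * 0) * C 0) / w = 0" "cos (w * 0) * S 0 + sin (w * 0) * C 0 = 0"
    by (simp_all add: S_def C_def)
  fix x assume x: "x \<in> {0..T}"
  have trig_mult: "\<bar>\<phi> * y\<bar> \<le> \<sigma>" if "\<bar>\<phi>\<bar> \<le> 1" "\<bar>y\<bar> \<le> \<sigma>" for \<phi> y
    using mult_mono[OF that] by (simp add: abs_mult)
  have "\<bar>S x\<bar> \<le> \<sigma>" "\<bar>C x\<bar> \<le> \<sigma>"
    unfolding S_def C_def \<sigma>_def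
    by (intro abs_integral_mult_le_L1 f x continuous_intros abs_sin_le_one abs_cos_le_one)+
  then have "\<bar>sin (w * x) * S x\<bar> \<le> \<sigma>" "\<bar>cos (w * x) * C x\<bar> \<le> \<sigma>"
    "\<bar>cos (w * x) * S x\<bar> \<le> \<sigma>" "\<bar>sin (w * x) * C x\<bar> \<le> \<sigma>"
    by (simp_all add: trig_mult)
  then show "\<bar>w * ((sin (w * x) * S x - cos (w * x) * C x) / w)\<bar> \<le> 2 * \<sigma>"
    and "\<bar>cos (w * x) * S x + sin (w * x) * C x\<bar> \<le> 2 * \<sigma>"
    using w by (auto intro!: order_trans[OF abs_triangle_ineq4] order_trans[OF abs_triangle_ineq])
qed

lemma oscillator_sol_has_derivative:
  assumes e: "oscillator_sol T w f e e1" and f: "continuous_on {0..T} f" and x: "x \<in> {0..T}"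
  shows "(e has_real_derivative e1 x) (at x within {0..T})"
    and "(e1 has_real_derivative f x - w\<^sup>2 * e x) (at x within {0..T})"
proof -
  note e' = oscillator_solD[OF e]
  show "(e has_real_derivative e1 x) (at x within {0..T})"
    by (rule has_real_derivative_primitive_within[OF e'(2) e'(3) x])
  show "(e1 has_real_derivative f x - w\<^sup>2 * e x) (at x within {0..T})"
    by (rule has_real_derivative_primitive_within[OF _ e'(4) x])
      (intro continuous_intros f e'(1))
qed

lemma oscillator_sol_homogeneous_initial_zero:
  assumes h: "oscillator_sol T w (\<lambda>_. 0) h h1" and h0: "h 0 = 0" "h1 0 = 0"
    and x: "x \<in> {0..T}"
  shows "h x = 0" and "h1 x = 0"
proof -
  define E where "E y = (h1 y)\<^sup>2 + w\<^sup>2 * (h y)\<^sup>2" for y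
  have "(E has_real_derivative 0) (at y within {0..T})" if y: "y \<in> {0..T}" for y
  proof -
    have dh: "(h has_real_derivative h1 y) (at y within {0..T})"
      and dh1: "(h1 has_real_derivative 0 - w\<^sup>2 * h y) (at y within {0..T})"
      using oscillator_sol_has_derivative[OF h continuous_on_const y] by simp_all
    show ?thesis
      unfolding E_def by (auto intro!: derivative_eq_intros dh dh1 simp: algebra_simps)
  qed
  then obtain k where "\<forall>y\<in>{0..T}. E y = k"
    using has_field_derivative_zero_constant[of "{0..T}" E] by auto
  then have "E y = E 0" if "y \<in> {0..T}" for y
    using x that by auto
  then have energy_0: "(h1 y)\<^sup>2 + w\<^sup>2 * (h y)\<^sup>2 = 0" if "y \<in> {0..T}" for y
    using that h0 by (simp add: E_def)
  have h1_0: "h1 y = 0" if "y \<in> {0..T}" for y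
  proof -
    have "(h1 y)\<^sup>2 = 0"
      using energy_0[OF that] by (smt (verit) mult_nonneg_nonneg zero_le_power2)
    then show ?thesis by simp
  qed
  then show "h1 x = 0" using x .
  have "integral {0..x} h1 = integral {0..x} (\<lambda>_. 0::real)"
    using x by (intro integral_cong h1_0) auto
  then show "h x = 0"
    using oscillator_solD(3)[OF h x] h0 by simp
qed

lemma oscillator_sol_homogeneous_eq:
  assumes g: "oscillator_sol T w (\<lambda>_. 0) g g1" and w: "w \<noteq> 0" and x: "x \<in> {0..T}"
  shows "g x = g 0 * cos (w * x) + g1 0 / w * sin (w * x)"
    and "g1 x = w * (g1 0 / w * cos (w * x) - g 0 * sin (w * x))"
proof -
  define A B where "A = g 0" and "B = g1 0 / w"
  have "oscillator_sol T w (\<lambda>t. 0 - 0)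
      (\<lambda>t. g t - (A * cos (w * t) + B * sin (w * t)))
      (\<lambda>t. g1 t - w * (B * cos (w * t) - A * sin (w * t)))"
    by (intro oscillator_sol_diff[OF g] oscillator_sol_cos_sin integrable_0)
  then have h: "oscillator_sol T w (\<lambda>_. 0)
      (\<lambda>t. g t - (A * cos (w * t) + B * sin (w * t)))
      (\<lambda>t. g1 t - w * (B * cos (w * t) - A * sin (w * t)))"
    by (simp only: diff_self)
  have "g 0 - (A * cos (w * 0) + B * sin (w * 0)) = 0"
    "g1 0 - w * (B * cos (w * 0) - A * sin (w * 0)) = 0"
    using w by (simp_all add: A_def B_def)
  from oscillator_sol_homogeneous_initial_zero[OF h this x]
  show "g x = g 0 * cos (w * x) + g1 0 / w * sin (w * x)"
    and "g1 x = w * (g1 0 / w * cos (w * x) - g 0 * sin (w * x))"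
    by (simp_all add: A_def B_def algebra_simps)
qed

lemma oscillator_sol_periodic_homogeneous_eq_0:
  assumes g: "oscillator_sol T w (\<lambda>_. 0) g g1" and periodic: "g T = g 0" "g1 T = g1 0"
    and nonres: "cos (w * T) \<noteq> 1" and x: "x \<in> {0..T}"
  shows "g x = 0"
proof -
  have w: "w \<noteq> 0" using nonres by auto
  have T: "T \<in> {0..T}" using x by auto
  define a v c s where "a = g 0" and "v = g1 0 / w" and "c = cos (w * T)" and "s = sin (w * T)"
  note at_T = oscillator_sol_homogeneous_eq[OF g w T,
      folded a_def v_def c_def s_def]
  have eq1: "a * (c - 1) + v * s = 0"
    using at_T(1) periodic(1) by (simp add: a_def algebra_simps)
  have "g1 0 = w * v" using w by (simp add: v_def)
  then have "w * (v * (c - 1) - a * s) = 0"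
    using at_T(2) periodic(2) by (simp add: algebra_simps)
  then have eq2: "v * (c - 1) - a * s = 0"
    using w by simp
  have det: "(c - 1)\<^sup>2 + s\<^sup>2 \<noteq> 0"
    using nonres by (simp add: c_def add_nonneg_eq_0_iff)
  have "a * ((c - 1)\<^sup>2 + s\<^sup>2) = (c - 1) * (a * (c - 1) + v * s) - s * (v * (c - 1) - a * s)"
    "v * ((c - 1)\<^sup>2 + s\<^sup>2) = s * (a * (c - 1) + v * s) + (c - 1) * (v * (c - 1) - a * s)"
    by (simp_all add: algebra_simps power2_eq_square)
  then have "a * ((c - 1)\<^sup>2 + s\<^sup>2) = 0" "v * ((c - 1)\<^sup>2 + s\<^sup>2) = 0"
    using eq1 eq2 by simp_all
  then have "a = 0" "v = 0"
    using det by auto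
  then show ?thesis
    using oscillator_sol_homogeneous_eq(1)[OF g w x] w by (simp add: a_def v_def)
qed

lemma oscillator_sol_periodic_unique:
  assumes e: "oscillator_sol T w f e e1" "e T = e 0" "e1 T = e1 0"
    and g: "oscillator_sol T w f g g1" "g T = g 0" "g1 T = g1 0"
    and f: "f integrable_on {0..T}" and nonres: "cos (w * T) \<noteq> 1" and x: "x \<in> {0..T}"
  shows "g x = e x"
proof -
  have "oscillator_sol T w (\<lambda>t. f t - f t) (\<lambda>t. g t - e t) (\<lambda>t. g1 t - e1 t)"
    by (intro oscillator_sol_diff[OF g(1) e(1)] f)
  then have "oscillator_sol T w (\<lambda>_. 0) (\<lambda>t. g t - e t) (\<lambda>t. g1 t - e1 t)"
    by (simp only: diff_self)
  from oscillator_sol_periodic_homogeneous_eq_0[OF this _ _ nonres x]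
  show ?thesis using e(2,3) g(2,3) by simp
qed

lemma rotation_system_solution:
  fixes c s P V \<rho> :: real
  assumes q: "(c - 1)\<^sup>2 + s\<^sup>2 > 0" and c: "\<bar>c - 1\<bar> \<le> 2" and s: "\<bar>s\<bar> \<le> 1"
    and P: "\<bar>P\<bar> \<le> \<rho>" and V: "\<bar>V\<bar> \<le> \<rho>"
  obtains A B where "A * (c - 1) + B * s = - P" "B * (c - 1) - A * s = - V"
    "\<bar>A\<bar> \<le> 3 * \<rho> / ((c - 1)\<^sup>2 + s\<^sup>2)" "\<bar>B\<bar> \<le> 3 * \<rho> / ((c - 1)\<^sup>2 + s\<^sup>2)"
proof
  define q where "q = (c - 1)\<^sup>2 + s\<^sup>2"
  show "(s * V - (c - 1) * P) / q * (c - 1) + - (s * P + (c - 1) * V) / q * s = - P"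
    "- (s * P + (c - 1) * V) / q * (c - 1) - (s * V - (c - 1) * P) / q * s = - V"
  proof -
    have "q \<noteq> 0" using q unfolding q_def by linarith
    then show "(s * V - (c - 1) * P) / q * (c - 1) + - (s * P + (c - 1) * V) / q * s = - P"
      "- (s * P + (c - 1) * V) / q * (c - 1) - (s * V - (c - 1) * P) / q * s = - V"
      by (simp_all add: field_simps) (simp_all add: q_def power2_eq_square algebra_simps)
  qed
  have prod_le: "\<bar>a * y\<bar> \<le> k * \<rho>" if "\<bar>a\<bar> \<le> k" "\<bar>y\<bar> \<le> \<rho>" for a k y :: real
    using mult_mono[OF that order_trans[OF abs_ge_zero that(1)] abs_ge_zero] by (simp add: abs_mult)
  have "\<bar>s * V - (c - 1) * P\<bar> \<le> \<bar>s * V\<bar> + \<bar>(c - 1) * P\<bar>"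
    by (rule abs_triangle_ineq4)
  also have "\<dots> \<le> 1 * \<rho> + 2 * \<rho>"
    by (intro add_mono prod_le c s P V)
  finally have "\<bar>s * V - (c - 1) * P\<bar> \<le> 3 * \<rho>" by simp
  then show "\<bar>(s * V - (c - 1) * P) / q\<bar> \<le> 3 * \<rho> / ((c - 1)\<^sup>2 + s\<^sup>2)"
    using q by (simp add: q_def divide_right_mono)
  have "\<bar>- (s * P + (c - 1) * V)\<bar> \<le> \<bar>s * P\<bar> + \<bar>(c - 1) * V\<bar>"
    unfolding abs_minus_cancel by (rule abs_triangle_ineq)
  also have "\<dots> \<le> 1 * \<rho> + 2 * \<rho>"
    by (intro add_mono prod_le c s P V)
  finally have "\<bar>- (s * P + (c - 1) * V)\<bar> \<le> 3 * \<rho>" by simp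
  then show "\<bar>- (s * P + (c - 1) * V) / q\<bar> \<le> 3 * \<rho> / ((c - 1)\<^sup>2 + s\<^sup>2)"
    using q by (simp add: q_def divide_right_mono)
qed

lemma abs_cos_sin_combination_le:
  fixes A B x :: real
  shows "\<bar>A * cos x + B * sin x\<bar> \<le> \<bar>A\<bar> + \<bar>B\<bar>"
proof -
  have "\<bar>A * cos x\<bar> \<le> \<bar>A\<bar>" "\<bar>B * sin x\<bar> \<le> \<bar>B\<bar>"
    by (simp_all add: abs_mult mult_right_le_one_le)
  then show ?thesis
    using abs_triangle_ineq[of "A * cos x" "B * sin x"] by linarith
qed

lemma periodic_oscillator_sol_exists:
  fixes f :: "real \<Rightarrow> real"
  assumes f: "f absolutely_integrable_on {0..T}" and T: "0 \<le> T" and w: "w > 0"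
    and \<beta>: "0 < \<beta>" "\<beta> \<le> 2 - 2 * cos (w * T)"
  obtains e e1 where "oscillator_sol T w f e e1" "e T = e 0" "e1 T = e1 0"
    "\<And>x. x \<in> {0..T} \<Longrightarrow> \<bar>e x\<bar> \<le> (2 + 12 / \<beta>) * integral {0..T} (\<lambda>t. \<bar>f t\<bar>) / w"
    "\<And>x. x \<in> {0..T} \<Longrightarrow> \<bar>e1 x\<bar> \<le> (2 + 12 / \<beta>) * integral {0..T} (\<lambda>t. \<bar>f t\<bar>)"
proof -
  define \<sigma> where "\<sigma> = integral {0..T} (\<lambda>t. \<bar>f t\<bar>)"
  have \<sigma>: "\<sigma> \<ge> 0"
    unfolding \<sigma>_def using f by (intro integral_nonneg) (auto simp: absolutely_integrable_on_def)
  have w0: "w \<noteq> 0" and T': "T \<in> {0..T}" using w T by simp_all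
  obtain p p1 where p: "oscillator_sol T w f p p1" "p 0 = 0" "p1 0 = 0"
    and p_le: "\<And>x. x \<in> {0..T} \<Longrightarrow> \<bar>w * p x\<bar> \<le> 2 * \<sigma>"
    and p1_le: "\<And>x. x \<in> {0..T} \<Longrightarrow> \<bar>p1 x\<bar> \<le> 2 * \<sigma>"
    using oscillator_sol_particular[OF f w0] unfolding \<sigma>_def by blast
  define c s where "c = cos (w * T)" and "s = sin (w * T)"
  have q: "(c - 1)\<^sup>2 + s\<^sup>2 = 2 - 2 * c"
    using sin_cos_squared_add[of "w * T"] by (simp add: c_def s_def power2_eq_square algebra_simps)
  obtain A B where AB: "A * (c - 1) + B * s = - (w * p T)" "B * (c - 1) - A * s = - p1 T"
    and AB_le: "\<bar>A\<bar> \<le> 3 * (2 * \<sigma>) / (2 - 2 * c)" "\<bar>B\<bar> \<le> 3 * (2 * \<sigma>) / (2 - 2 * c)"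
    using rotation_system_solution[of c s "w * p T" "2 * \<sigma>" "p1 T"] p_le[OF T'] p1_le[OF T'] \<beta>
      abs_cos_le_one[of "w * T"] abs_sin_le_one[of "w * T"]
    unfolding q by (auto simp: c_def s_def)
  have "3 * (2 * \<sigma>) / (2 - 2 * c) \<le> 3 * (2 * \<sigma>) / \<beta>"
    using \<beta> \<sigma> by (intro divide_left_mono) (auto simp: c_def)
  then have AB_sum: "\<bar>A\<bar> + \<bar>B\<bar> \<le> 12 * \<sigma> / \<beta>"
    using AB_le by simp
  define e where "e x = A / w * cos (w * x) + B / w * sin (w * x) + p x" for x
  define e1 where "e1 x = w * (B / w * cos (w * x) - A / w * sin (w * x)) + p1 x" for x
  have "oscillator_sol T w (\<lambda>t. 0 + f t) e e1"
    unfolding e_def e1_def using f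
    by (intro oscillator_sol_add[OF oscillator_sol_cos_sin p(1)] integrable_0)
      (simp add: absolutely_integrable_on_def)
  then have sol: "oscillator_sol T w f e e1" by simp
  have e_eq: "w * e x = A * cos (w * x) + B * sin (w * x) + w * p x" for x
    using w0 by (simp add: e_def field_simps)
  have e1_eq: "e1 x = B * cos (w * x) - A * sin (w * x) + p1 x" for x
    using w0 by (simp add: e1_def right_diff_distrib)
  have periodic: "e T = e 0" "e1 T = e1 0"
    using AB p(2,3) w0 by (simp_all add: e_def e1_eq c_def s_def field_simps)
  show ?thesis
  proof (rule that[OF sol periodic, folded \<sigma>_def])
    fix x assume x: "x \<in> {0..T}"
    have "\<bar>w * e x\<bar> \<le> \<bar>A * cos (w * x) + B * sin (w * x)\<bar> + \<bar>w * p x\<bar>"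
      unfolding e_eq by (rule abs_triangle_ineq)
    also have "\<dots> \<le> 12 * \<sigma> / \<beta> + 2 * \<sigma>"
      using abs_cos_sin_combination_le[of A "w * x" B] AB_sum p_le[OF x] by linarith
    finally show "\<bar>e x\<bar> \<le> (2 + 12 / \<beta>) * \<sigma> / w"
      using w \<beta> by (simp add: abs_mult field_simps)
    have "\<bar>e1 x\<bar> \<le> \<bar>B * cos (w * x) + (- A) * sin (w * x)\<bar> + \<bar>p1 x\<bar>"
      using abs_triangle_ineq by (simp add: e1_eq)
    also have "\<dots> \<le> 12 * \<sigma> / \<beta> + 2 * \<sigma>"
      using abs_cos_sin_combination_le[of B "w * x" "- A"] AB_sum p1_le[OF x] by linarith
    finally show "\<bar>e1 x\<bar> \<le> (2 + 12 / \<beta>) * \<sigma>"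
      using \<beta> by (simp add: field_simps)
  qed
qed

section \<open>Non-resonance\<close>

lemma cos_le_cos_of_dist_to_ints:
  fixes t \<delta> :: real
  assumes \<delta>: "0 \<le> \<delta>" "\<delta> \<le> 1/2" and dist: "\<And>n::int. \<delta> \<le> \<bar>t - n\<bar>"
  shows "cos (2 * pi * t) \<le> cos (2 * pi * \<delta>)"
proof -
  define r where "r = t - round t"
  have r: "\<delta> \<le> \<bar>r\<bar>" "\<bar>r\<bar> \<le> 1/2"
    using dist[of "round t"] of_int_round_abs_le[of t] by (simp_all add: r_def abs_minus_commute)
  have "cos (2 * pi * t) = cos (2 * pi * r + of_int (round t) * (2 * pi))"
    by (simp add: r_def algebra_simps)
  also have "\<dots> = cos (2 * pi * r)"
    using cos.plus_of_int[of "2 * pi * r" "round t"] by simp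
  also have "\<dots> = cos (2 * pi * \<bar>r\<bar>)"
    using cos_abs_real[of "2 * pi * r"] by (simp add: abs_mult)
  also have "\<dots> \<le> cos (2 * pi * \<delta>)"
    using \<delta> r by (intro cos_monotone_0_pi_le) auto
  finally show ?thesis .
qed

lemma nonresonant_far_from_ints:
  fixes a w :: real and n :: int
  assumes a: "a > 0" and w: "w > 0" and nonres: "\<And>j::nat. a * w \<le> \<bar>(real j)\<^sup>2 - w\<^sup>2\<bar>"
  shows "min (1/2) (a\<^sup>2 / (2 * a + 1)) \<le> \<bar>w - n\<bar>"
proof -
  have "a * w \<le> w * w" using nonres[of 0] w by (simp add: power2_eq_square)
  then have aw: "a \<le> w" using w by simp
  have small: "a\<^sup>2 / (2 * a + 1) \<le> a"
    using a by (simp add: divide_le_eq power2_eq_square algebra_simps)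
  consider "n \<le> 0" | "1/2 \<le> \<bar>w - n\<bar>" | "n > 0" "\<bar>w - n\<bar> < 1/2" by linarith
  then show ?thesis
  proof cases
    case 1
    then show ?thesis using aw small w by linarith
  next
    case 2
    then show ?thesis by linarith
  next
    case 3
    define u where "u = \<bar>w - n\<bar>"
    have "(real (nat n))\<^sup>2 - w\<^sup>2 = (n - w) * (n + w)"
      using 3 by (simp add: power2_eq_square algebra_simps)
    then have "a * w \<le> u * (n + w)"
      using nonres[of "nat n"] 3 w by (simp add: u_def abs_mult abs_minus_commute)
    also have "\<dots> \<le> u * (2 * w + 1)"
      using 3 abs_le_D2[of "w - n" "1/2"] by (intro mult_left_mono) (auto simp: u_def)
    finally have near: "a * w \<le> u * (2 * w + 1)" .
    have "a\<^sup>2 * (2 * w + 1) \<le> a * w * (2 * a + 1)"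
      using mult_left_mono[OF aw, of a] a by (simp add: power2_eq_square algebra_simps)
    also have "\<dots> \<le> u * (2 * w + 1) * (2 * a + 1)"
      using near a by (intro mult_right_mono) auto
    finally have "a\<^sup>2 * (2 * w + 1) \<le> (u * (2 * a + 1)) * (2 * w + 1)"
      by (simp add: algebra_simps)
    then have "a\<^sup>2 \<le> u * (2 * a + 1)"
      using w by simp
    then have "a\<^sup>2 / (2 * a + 1) \<le> u"
      using a by (simp add: divide_le_eq)
    then show ?thesis by (simp add: u_def)
  qed
qed

lemma nonresonance_cos_bound:
  fixes c :: real
  assumes c: "c > 0"
  obtains \<beta> where "\<beta> > 0"
    "\<And>w. w > 0 \<Longrightarrow> (\<And>j::nat. c * pi * w \<le> \<bar>(real j)\<^sup>2 - w\<^sup>2\<bar>) \<Longrightarrow> \<beta> \<le> 2 - 2 * cos (w * (2 * pi))"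
proof
  define a \<delta> where "a = c * pi" and "\<delta> = min (1/2) (a\<^sup>2 / (2 * a + 1))"
  have a: "a > 0" using c by (simp add: a_def)
  have \<delta>: "0 < \<delta>" "\<delta> \<le> 1/2"
    using a unfolding \<delta>_def by simp (rule min.cobounded1)
  show "2 - 2 * cos (2 * pi * \<delta>) > 0"
    using cos_monotone_0_pi[of 0 "2 * pi * \<delta>"] \<delta> by simp
  fix w :: real assume "w > 0" and "\<And>j::nat. c * pi * w \<le> \<bar>(real j)\<^sup>2 - w\<^sup>2\<bar>"
  then have "\<delta> \<le> \<bar>w - n\<bar>" for n :: int
    unfolding \<delta>_def using a by (intro nonresonant_far_from_ints) (simp_all add: a_def)
  then show "2 - 2 * cos (2 * pi * \<delta>) \<le> 2 - 2 * cos (w * (2 * pi))"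
    using cos_le_cos_of_dist_to_ints[of \<delta> w] \<delta> by (simp add: mult.commute)
qed

lemma nonresonance_rescaled:
  fixes eps l c :: real and j :: nat
  assumes eps: "eps > 0" and l: "l > 0" and w: "w = l / (pi * eps)"
  shows "c * eps / l \<le> \<bar>(real j)\<^sup>2 * eps\<^sup>2 / l\<^sup>2 - lambda_star\<bar> \<longleftrightarrow> c * pi * w \<le> \<bar>(real j)\<^sup>2 - w\<^sup>2\<bar>"
proof -
  define k where "k = l\<^sup>2 / eps\<^sup>2"
  have k: "k > 0" using eps l by (simp add: k_def)
  have "\<bar>(real j)\<^sup>2 * eps\<^sup>2 / l\<^sup>2 - lambda_star\<bar> * k = \<bar>(real j)\<^sup>2 - w\<^sup>2\<bar>"
    using eps l k by (simp add: k_def w lambda_star_def lambda0_def abs_mult field_simps power2_eq_square)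
  moreover have "c * eps / l * k = c * pi * w"
    using eps l by (simp add: k_def w field_simps power2_eq_square)
  ultimately show ?thesis
    using mult_le_cancel_right_pos[OF k, of "c * eps / l"] by metis
qed

section \<open>Square-integrable functions on [0, 2 pi]\<close>

lemma L2_on_imp_absolutely_integrable:
  assumes "L2_on d"
  shows "d absolutely_integrable_on {0..2*pi}"
proof (rule measurable_bounded_by_integrable_imp_absolutely_integrable[where g = "\<lambda>x. (1 + (d x)\<^sup>2) / 2"])
  show "d \<in> borel_measurable (lebesgue_on {0..2*pi})"
    using assms by (simp add: L2_on_def measurable_on_iff_borel_measurable)
  show "(\<lambda>x. (1 + (d x)\<^sup>2) / 2) integrable_on {0..2*pi}"
    using assms unfolding L2_on_def by (intro integrable_on_divide integrable_add integrable_const_ivl) auto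
  fix x
  have "0 \<le> (\<bar>d x\<bar> - 1)\<^sup>2" by simp
  then show "norm (d x) \<le> (1 + (d x)\<^sup>2) / 2" by (simp add: power2_eq_square algebra_simps)
qed simp

lemma L2_on_continuous:
  assumes "continuous_on {0..2*pi} f"
  shows "L2_on f"
proof -
  have "f measurable_on {0..2*pi}"
    using continuous_imp_measurable_on_sets_lebesgue[OF assms]
    by (simp add: measurable_on_iff_borel_measurable)
  moreover have "(\<lambda>x. (f x)\<^sup>2) integrable_on {0..2*pi}"
    by (intro integrable_continuous_interval continuous_intros assms)
  ultimately show ?thesis
    by (simp add: L2_on_def)
qed

lemma L2_on_lincomb:
  assumes f: "L2_on f" and g: "L2_on g"
  shows "L2_on (\<lambda>x. a * f x + b * g x)"
proof -
  have "(\<lambda>x. a * f x + b * g x) measurable_on {0..2*pi}"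
    using f g unfolding L2_on_def by (intro measurable_on_add measurable_on_cmul) auto
  moreover have "(\<lambda>x. (a * f x + b * g x)\<^sup>2) integrable_on {0..2*pi}"
  proof (rule measurable_bounded_by_integrable_imp_integrable_real)
    show "(\<lambda>x. (a * f x + b * g x)\<^sup>2) \<in> borel_measurable (lebesgue_on {0..2*pi})"
      using calculation by (simp add: measurable_on_iff_borel_measurable)
    show "(\<lambda>x. 2 * a\<^sup>2 * (f x)\<^sup>2 + 2 * b\<^sup>2 * (g x)\<^sup>2) integrable_on {0..2*pi}"
      using f g unfolding L2_on_def by (intro integrable_add integrable_on_mult_right) auto
    fix x
    have "0 \<le> (a * f x - b * g x)\<^sup>2" by simp
    then show "\<bar>(a * f x + b * g x)\<^sup>2\<bar> \<le> 2 * a\<^sup>2 * (f x)\<^sup>2 + 2 * b\<^sup>2 * (g x)\<^sup>2"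
      unfolding abs_power2 by (simp add: power2_eq_square algebra_simps)
  qed simp
  ultimately show ?thesis by (simp add: L2_on_def)
qed

lemma L2_norm_sq_nonneg: "L2_on f \<Longrightarrow> L2_norm_sq f \<ge> 0"
  unfolding L2_on_def L2_norm_sq_def by (auto intro: integral_nonneg)

lemma L2_norm_sq_lincomb_le:
  assumes f: "L2_on f" and g: "L2_on g"
  shows "L2_norm_sq (\<lambda>x. a * f x + b * g x) \<le> 2 * a\<^sup>2 * L2_norm_sq f + 2 * b\<^sup>2 * L2_norm_sq g"
proof -
  have f2: "(\<lambda>x. (f x)\<^sup>2) integrable_on {0..2*pi}" and g2: "(\<lambda>x. (g x)\<^sup>2) integrable_on {0..2*pi}"
    using f g by (simp_all add: L2_on_def)
  have "L2_norm_sq (\<lambda>x. a * f x + b * g x)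
      \<le> integral {0..2*pi} (\<lambda>x. 2 * a\<^sup>2 * (f x)\<^sup>2 + 2 * b\<^sup>2 * (g x)\<^sup>2)"
    unfolding L2_norm_sq_def
  proof (rule integral_le)
    show "(\<lambda>x. (a * f x + b * g x)\<^sup>2) integrable_on {0..2*pi}"
      using L2_on_lincomb[OF f g] by (simp add: L2_on_def)
    show "(\<lambda>x. 2 * a\<^sup>2 * (f x)\<^sup>2 + 2 * b\<^sup>2 * (g x)\<^sup>2) integrable_on {0..2*pi}"
      using f2 g2 by (intro integrable_add integrable_on_mult_right)
    fix x
    have "0 \<le> (a * f x - b * g x)\<^sup>2" by simp
    then show "(a * f x + b * g x)\<^sup>2 \<le> 2 * a\<^sup>2 * (f x)\<^sup>2 + 2 * b\<^sup>2 * (g x)\<^sup>2"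
      by (simp add: power2_eq_square algebra_simps)
  qed
  also have "\<dots> = 2 * a\<^sup>2 * L2_norm_sq f + 2 * b\<^sup>2 * L2_norm_sq g"
    unfolding L2_norm_sq_def using f2 g2 by (simp add: integral_add integrable_on_mult_right)
  finally show ?thesis .
qed

lemma L2_norm_sq_le_sup:
  assumes f: "L2_on f" and bound: "\<And>x. x \<in> {0..2*pi} \<Longrightarrow> \<bar>f x\<bar> \<le> E"
  shows "L2_norm_sq f \<le> 2 * pi * E\<^sup>2"
proof -
  have "(f x)\<^sup>2 \<le> E\<^sup>2" if "x \<in> {0..2*pi}" for x
    using power_mono[OF bound[OF that] abs_ge_zero, of 2] by simp
  then have "L2_norm_sq f \<le> integral {0..2*pi} (\<lambda>_. E\<^sup>2)"
    unfolding L2_norm_sq_def using f by (intro integral_le) (auto simp: L2_on_def)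
  then show ?thesis by simp
qed

lemma Linf_norm_sq_le_sup:
  assumes bound: "\<And>x. x \<in> {0..2*pi} \<Longrightarrow> \<bar>f x\<bar> \<le> E"
  shows "Linf_norm_sq f \<le> E\<^sup>2"
proof -
  have "bdd_above ((\<lambda>x. \<bar>f x\<bar>) ` {0..2*pi})"
    using bound by (rule bdd_aboveI2)
  then have "\<bar>f 0\<bar> \<le> (SUP x\<in>{0..2*pi}. \<bar>f x\<bar>)"
    by (rule cSUP_upper[rotated]) simp
  then have nonneg: "0 \<le> (SUP x\<in>{0..2*pi}. \<bar>f x\<bar>)"
    using abs_ge_zero order_trans by blast
  have "(SUP x\<in>{0..2*pi}. \<bar>f x\<bar>) \<le> E"
    using bound by (intro cSUP_least) simp_all
  then show ?thesis
    unfolding Linf_norm_sq_def using nonneg by (rule power_mono)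
qed

text \<open>From \<open>0 \<le> \<integral> (\<bar>d\<bar> - m)\<^sup>2\<close>, where \<open>m\<close> is the mean of \<open>\<bar>d\<bar>\<close>.\<close>
lemma L1_norm_sq_le_L2_norm_sq:
  assumes d: "L2_on d"
  shows "(integral {0..2*pi} (\<lambda>x. \<bar>d x\<bar>))\<^sup>2 \<le> 2 * pi * L2_norm_sq d"
proof -
  define M N m where "M = integral {0..2*pi} (\<lambda>x. \<bar>d x\<bar>)" and "N = L2_norm_sq d"
    and "m = M / (2 * pi)"
  have ad: "(\<lambda>x. \<bar>d x\<bar>) integrable_on {0..2*pi}"
    using L2_on_imp_absolutely_integrable[OF d] by (simp add: absolutely_integrable_on_def)
  have d2: "(\<lambda>x. (d x)\<^sup>2) integrable_on {0..2*pi}"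
    using d by (simp add: L2_on_def)
  have square: "(\<bar>d x\<bar> - m)\<^sup>2 = (d x)\<^sup>2 - 2 * m * \<bar>d x\<bar> + m\<^sup>2" for x
    by (simp add: power2_diff)
  have d2_ad: "(\<lambda>x. (d x)\<^sup>2 - 2 * m * \<bar>d x\<bar>) integrable_on {0..2*pi}"
    using d2 ad by (intro integrable_diff integrable_on_mult_right)
  have "0 \<le> integral {0..2*pi} (\<lambda>x. (d x)\<^sup>2 - 2 * m * \<bar>d x\<bar> + m\<^sup>2)"
    using d2_ad by (intro integral_nonneg integrable_add integrable_const_ivl) (simp_all flip: square)
  also have "\<dots> = integral {0..2*pi} (\<lambda>x. (d x)\<^sup>2 - 2 * m * \<bar>d x\<bar>) + integral {0..2*pi} (\<lambda>x. m\<^sup>2)"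
    by (rule integral_add[OF d2_ad integrable_const_ivl])
  also have "\<dots> = N - 2 * m * M + m\<^sup>2 * (2 * pi)"
    using d2 ad by (simp add: integral_diff integrable_on_mult_right M_def N_def L2_norm_sq_def)
  also have "\<dots> = N - M\<^sup>2 / (2 * pi)"
    using pi_gt_zero by (simp add: m_def power2_eq_square field_simps)
  finally show ?thesis
    unfolding M_def[symmetric] N_def[symmetric] using pi_gt_zero by (simp add: field_simps)
qed

section \<open>The periodic problem\<close>

lemma integral_cong_AE_interval:
  fixes f g :: "real \<Rightarrow> real"
  assumes fg: "AE t in lebesgue. t \<in> {a<..<b} \<longrightarrow> f t = g t" and x: "x \<in> {a..b}"
  shows "integral {a..x} f = integral {a..x} g"
proof -
  obtain N where N: "N \<in> null_sets lebesgue" and fg_N: "\<And>t. t \<notin> N \<Longrightarrow> t \<in> {a<..<b} \<longrightarrow> f t = g t"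
    using fg by (auto elim!: AE_E3)
  show ?thesis
  proof (rule integral_spike[of "N \<union> {a, b}"])
    show "negligible (N \<union> {a, b})"
      using N by (simp add: negligible_iff_null_sets)
  qed (use x fg_N in auto)
qed

lemma periodic_sol_imp_oscillator_sol:
  assumes sol: "periodic_sol eps l d e e1 e2" and eps: "eps > 0" and l: "l > 0"
    and w: "w = l / (pi * eps)"
  shows "oscillator_sol (2 * pi) w (\<lambda>t. w\<^sup>2 / 4 * d t) e e1"
    and "e (2 * pi) = e 0" and "e1 (2 * pi) = e1 0"
proof -
  have e2: "L2_on e2"
    and prim: "\<And>x. x \<in> {0..2*pi} \<Longrightarrow> e1 x = e1 0 + integral {0..x} e2 \<and> e x = e 0 + integral {0..x} e1"
    and ode: "AE x in lebesgue. x \<in> {0<..<2*pi} \<longrightarrow> eps\<^sup>2 * (4 * pi\<^sup>2 / l\<^sup>2) * e2 x + lambda0 * e x = d x"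
    using sol unfolding periodic_sol_def H2_derivs_def by blast+
  show "e (2 * pi) = e 0" "e1 (2 * pi) = e1 0"
    using sol unfolding periodic_sol_def by simp_all
  have "e2 integrable_on {0..2*pi}"
    using L2_on_imp_absolutely_integrable[OF e2] by (simp add: absolutely_integrable_on_def)
  then have e1_cont: "continuous_on {0..2*pi} e1"
    by (rule continuous_on_primitive) (use prim in blast)
  have e_cont: "continuous_on {0..2*pi} e"
    by (rule continuous_on_primitive[OF integrable_continuous_interval[OF e1_cont]])
      (use prim in blast)
  have "w \<noteq> 0" and scale: "eps\<^sup>2 * (4 * pi\<^sup>2 / l\<^sup>2) = 4 / w\<^sup>2"
    using eps l by (simp_all add: w field_simps power2_eq_square)
  from ode[unfolded scale lambda0_def]
  have "AE t in lebesgue. t \<in> {0<..<2*pi} \<longrightarrow> e2 t = w\<^sup>2 / 4 * d t - w\<^sup>2 * e t"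
    by eventually_elim (use \<open>w \<noteq> 0\<close> in \<open>auto simp: field_simps\<close>)
  then have e2_eq: "integral {0..x} e2 = integral {0..x} (\<lambda>t. w\<^sup>2 / 4 * d t - w\<^sup>2 * e t)"
    if "x \<in> {0..2*pi}" for x
    using that by (rule integral_cong_AE_interval)
  show "oscillator_sol (2 * pi) w (\<lambda>t. w\<^sup>2 / 4 * d t) e e1"
    unfolding oscillator_sol_def
  proof (intro conjI ballI e_cont e1_cont)
    fix x assume x: "x \<in> {0..2*pi}"
    show "e x = e 0 + integral {0..x} e1"
      using prim[OF x] by blast
    show "e1 x = e1 0 + integral {0..x} (\<lambda>t. w\<^sup>2 / 4 * d t - w\<^sup>2 * e t)"
      using prim[OF x] by (simp only: e2_eq[OF x])
  qed
qed

lemma oscillator_sol_imp_periodic_sol: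
  assumes sol: "oscillator_sol (2 * pi) w (\<lambda>t. w\<^sup>2 / 4 * d t) e e1"
    and periodic: "e (2 * pi) = e 0" "e1 (2 * pi) = e1 0"
    and d: "L2_on d" and eps: "eps > 0" and l: "l > 0" and w: "w = l / (pi * eps)"
  shows "periodic_sol eps l d e e1 (\<lambda>t. w\<^sup>2 / 4 * d t - w\<^sup>2 * e t)"
proof -
  note e = oscillator_solD[OF sol]
  have L2: "L2_on (\<lambda>t. w\<^sup>2 / 4 * d t - w\<^sup>2 * e t)"
    using L2_on_lincomb[OF d L2_on_continuous[OF e(1)], of "w\<^sup>2 / 4" "- w\<^sup>2"] by simp
  have prim: "\<forall>x\<in>{0..2*pi}. e1 x = e1 0 + integral {0..x} (\<lambda>t. w\<^sup>2 / 4 * d t - w\<^sup>2 * e t)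
      \<and> e x = e 0 + integral {0..x} e1"
    using e(3,4) by blast
  have "w \<noteq> 0" and scale: "eps\<^sup>2 * (4 * pi\<^sup>2 / l\<^sup>2) = 4 / w\<^sup>2"
    using eps l by (simp_all add: w field_simps power2_eq_square)
  then have "eps\<^sup>2 * (4 * pi\<^sup>2 / l\<^sup>2) * (w\<^sup>2 / 4 * d x - w\<^sup>2 * e x) + lambda0 * e x = d x" for x
    unfolding scale lambda0_def using \<open>w \<noteq> 0\<close> by (simp add: right_diff_distrib)
  then have ode: "AE x in lebesgue. x \<in> {0<..<2*pi} \<longrightarrow>
      eps\<^sup>2 * (4 * pi\<^sup>2 / l\<^sup>2) * (w\<^sup>2 / 4 * d x - w\<^sup>2 * e x) + lambda0 * e x = d x"
    by simp
  show ?thesis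
    unfolding periodic_sol_def H2_derivs_def
    using L2 prim ode periodic[symmetric] by (intro conjI) assumption+
qed

lemma periodic_sol_unique:
  assumes e: "periodic_sol eps l d e e1 e2" and f: "periodic_sol eps l d f f1 f2"
    and d: "L2_on d" and eps: "eps > 0" and l: "l > 0"
    and nonres: "cos (l / (pi * eps) * (2 * pi)) \<noteq> 1" and x: "x \<in> {0..2*pi}"
  shows "f x = e x"
proof -
  define w where "w = l / (pi * eps)"
  have "(\<lambda>t. w\<^sup>2 / 4 * d t) integrable_on {0..2*pi}"
    using L2_on_imp_absolutely_integrable[OF d]
    by (intro integrable_on_mult_right) (simp add: absolutely_integrable_on_def)
  from oscillator_sol_periodic_unique[OF periodic_sol_imp_oscillator_sol[OF e eps l w_def]
      periodic_sol_imp_oscillator_sol[OF f eps l w_def] this nonres[folded w_def] x]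
  show ?thesis .
qed

lemma periodic_problem_estimate:
  assumes d: "L2_on d" and eps: "eps > 0" and l: "l > 0" and w: "w = l / (pi * eps)"
    and e: "continuous_on {0..2*pi} e" and e1: "continuous_on {0..2*pi} e1"
    and e_le: "\<And>x. x \<in> {0..2*pi} \<Longrightarrow> \<bar>e x\<bar> \<le> E"
    and e1_le: "\<And>x. x \<in> {0..2*pi} \<Longrightarrow> \<bar>e1 x\<bar> \<le> w * E"
  shows "Linf_norm_sq e + eps\<^sup>2 / l\<^sup>2 * L2_norm_sq e1
      + eps ^ 4 / l ^ 4 * L2_norm_sq (\<lambda>t. w\<^sup>2 / 4 * d t - w\<^sup>2 * e t)
    \<le> 3 * E\<^sup>2 + L2_norm_sq d"
proof -
  have w_pos: "w > 0" using eps l by (simp add: w)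
  have "eps / l = 1 / (pi * w)" using eps l by (simp add: w)
  then have k2: "eps\<^sup>2 / l\<^sup>2 = 1 / (pi * w)\<^sup>2" and k4: "eps ^ 4 / l ^ 4 = 1 / (pi * w) ^ 4"
    unfolding power_divide[symmetric] by (simp_all add: power_one_over)
  have pi3: "27 \<le> pi ^ 3" using power_mono[OF less_imp_le[OF pi_gt3], of 3] by simp
  have pi4: "1 \<le> pi ^ 4" using pi_gt3 by simp
  have N: "L2_norm_sq d \<ge> 0" by (rule L2_norm_sq_nonneg[OF d])
  have "eps\<^sup>2 / l\<^sup>2 * L2_norm_sq e1 \<le> 1 / (pi * w)\<^sup>2 * (2 * pi * (w * E)\<^sup>2)"
    unfolding k2 by (intro mult_left_mono L2_norm_sq_le_sup L2_on_continuous e1 e1_le) auto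
  also have "\<dots> = 2 / pi * E\<^sup>2"
    using w_pos by (simp add: field_simps power2_eq_square)
  also have "\<dots> \<le> E\<^sup>2"
    using pi_gt3 by (intro mult_left_le_one_le) (simp_all add: divide_le_eq)
  finally have e1_part: "eps\<^sup>2 / l\<^sup>2 * L2_norm_sq e1 \<le> E\<^sup>2" .
  have "L2_norm_sq (\<lambda>t. w\<^sup>2 / 4 * d t - w\<^sup>2 * e t)
      \<le> 2 * (w\<^sup>2 / 4)\<^sup>2 * L2_norm_sq d + 2 * (- w\<^sup>2)\<^sup>2 * L2_norm_sq e"
    using L2_norm_sq_lincomb_le[OF d L2_on_continuous[OF e], of "w\<^sup>2 / 4" "- w\<^sup>2"] by simp
  also have "\<dots> \<le> 2 * (w\<^sup>2 / 4)\<^sup>2 * L2_norm_sq d + 2 * (- w\<^sup>2)\<^sup>2 * (2 * pi * E\<^sup>2)"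
    by (intro add_left_mono mult_left_mono L2_norm_sq_le_sup L2_on_continuous e e_le) auto
  finally have "eps ^ 4 / l ^ 4 * L2_norm_sq (\<lambda>t. w\<^sup>2 / 4 * d t - w\<^sup>2 * e t)
      \<le> 1 / (pi * w) ^ 4 * (2 * (w\<^sup>2 / 4)\<^sup>2 * L2_norm_sq d + 2 * (- w\<^sup>2)\<^sup>2 * (2 * pi * E\<^sup>2))"
    unfolding k4 by (rule mult_left_mono) auto
  also have "\<dots> = 1 / (8 * pi ^ 4) * L2_norm_sq d + 4 / pi ^ 3 * E\<^sup>2"
    using w_pos by (simp add: field_simps power2_eq_square power4_eq_xxxx power3_eq_cube)
  also have "\<dots> \<le> L2_norm_sq d + E\<^sup>2"
    using pi3 pi4 N by (intro add_mono mult_left_le_one_le) (simp_all add: divide_le_eq)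
  finally have e2_part: "eps ^ 4 / l ^ 4 * L2_norm_sq (\<lambda>t. w\<^sup>2 / 4 * d t - w\<^sup>2 * e t)
      \<le> L2_norm_sq d + E\<^sup>2" .
  have "Linf_norm_sq e \<le> E\<^sup>2"
    using e_le by (rule Linf_norm_sq_le_sup)
  then show ?thesis
    using e1_part e2_part by linarith
qed

lemma periodic_problem_constant_le:
  fixes K M N c w :: real
  assumes eps: "eps > 0" and l: "l > 0" and w: "w = l / (pi * eps)"
    and c: "0 < c" "c * pi \<le> w" and M: "M\<^sup>2 \<le> 2 * pi * N" and N: "0 \<le> N"
  shows "3 * (K * w * M / 4)\<^sup>2 + N \<le> (K\<^sup>2 + 1 / c\<^sup>2) * (l\<^sup>2 / eps\<^sup>2) * N"
proof -
  have lw: "l\<^sup>2 / eps\<^sup>2 = pi\<^sup>2 * w\<^sup>2"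
    using eps l by (simp add: w field_simps power2_eq_square)
  have "3 * (K * w * M / 4)\<^sup>2 = 3 / 16 * (K\<^sup>2 * w\<^sup>2) * M\<^sup>2"
    by (simp add: power2_eq_square)
  also have "\<dots> \<le> 3 / 16 * (K\<^sup>2 * w\<^sup>2) * (2 * pi * N)"
    using M by (intro mult_left_mono) simp_all
  also have "\<dots> = (3 * pi / 8) * (K\<^sup>2 * w\<^sup>2 * N)"
    by simp
  also have "\<dots> \<le> pi\<^sup>2 * (K\<^sup>2 * w\<^sup>2 * N)"
    using pi_gt3 N by (intro mult_right_mono) (simp_all add: power2_eq_square)
  finally have E_part: "3 * (K * w * M / 4)\<^sup>2 \<le> K\<^sup>2 * (l\<^sup>2 / eps\<^sup>2) * N"
    by (simp add: lw mult_ac)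
  have "c * 1 \<le> c * pi"
    using c pi_gt3 by (intro mult_left_mono) auto
  then have "c \<le> w"
    using c by linarith
  then have "c\<^sup>2 * 1 \<le> w\<^sup>2 * pi\<^sup>2"
    using c pi_gt3 by (intro mult_mono power_mono) auto
  then have "1 \<le> 1 / c\<^sup>2 * (l\<^sup>2 / eps\<^sup>2)"
    using c by (simp add: lw field_simps)
  then have "N \<le> 1 / c\<^sup>2 * (l\<^sup>2 / eps\<^sup>2) * N"
    using mult_right_mono[OF _ N] by fastforce
  with E_part show ?thesis
    by (simp add: algebra_simps)
qed

lemma periodic_problem_well_posed:
  assumes eps: "eps > 0" and l: "l > 0" and d: "L2_on d" and w: "w = l / (pi * eps)"
    and \<beta>: "0 < \<beta>" "\<beta> \<le> 2 - 2 * cos (w * (2 * pi))"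
    and c: "0 < c" "c * pi \<le> w"
  shows "\<exists>e e1 e2. periodic_sol eps l d e e1 e2 \<and>
       (\<forall>f f1 f2. periodic_sol eps l d f f1 f2 \<longrightarrow> (\<forall>x\<in>{0..2*pi}. f x = e x)) \<and>
       Linf_norm_sq e + eps^2 / l^2 * L2_norm_sq e1 + eps^4 / l^4 * L2_norm_sq e2
         \<le> ((2 + 12 / \<beta>)\<^sup>2 + 1 / c\<^sup>2) * (l^2 / eps^2) * L2_norm_sq d"
proof -
  define K M where "K = 2 + 12 / \<beta>" and "M = integral {0..2*pi} (\<lambda>t. \<bar>d t\<bar>)"
  have w_pos: "w > 0" using eps l by (simp add: w)
  have f: "(\<lambda>t. w\<^sup>2 / 4 * d t) absolutely_integrable_on {0..2*pi}"
    using L2_on_imp_absolutely_integrable[OF d] by simp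
  have f_L1: "integral {0..2*pi} (\<lambda>t. \<bar>w\<^sup>2 / 4 * d t\<bar>) = w * (w * M / 4)"
    by (simp add: M_def abs_mult power2_eq_square)
  obtain e e1 where sol: "oscillator_sol (2 * pi) w (\<lambda>t. w\<^sup>2 / 4 * d t) e e1"
    and periodic: "e (2 * pi) = e 0" "e1 (2 * pi) = e1 0"
    and e_le: "\<And>x. x \<in> {0..2*pi} \<Longrightarrow> \<bar>e x\<bar> \<le> K * (w * (w * M / 4)) / w"
    and e1_le: "\<And>x. x \<in> {0..2*pi} \<Longrightarrow> \<bar>e1 x\<bar> \<le> K * (w * (w * M / 4))"
    using periodic_oscillator_sol_exists[OF f _ w_pos \<beta>] unfolding f_L1 K_def by auto
  have e_le': "\<bar>e x\<bar> \<le> K * w * M / 4" and e1_le': "\<bar>e1 x\<bar> \<le> w * (K * w * M / 4)"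
    if "x \<in> {0..2*pi}" for x
    using e_le[OF that] e1_le[OF that] w_pos by (simp_all add: mult_ac)
  note e = oscillator_solD[OF sol]
  have sol': "periodic_sol eps l d e e1 (\<lambda>t. w\<^sup>2 / 4 * d t - w\<^sup>2 * e t)"
    by (rule oscillator_sol_imp_periodic_sol[OF sol periodic d eps l w])
  have "cos (l / (pi * eps) * (2 * pi)) \<noteq> 1"
    using \<beta> w by auto
  then have unique: "\<forall>f f1 f2. periodic_sol eps l d f f1 f2 \<longrightarrow> (\<forall>x\<in>{0..2*pi}. f x = e x)"
    using periodic_sol_unique[OF sol' _ d eps l] by blast
  have "Linf_norm_sq e + eps^2 / l^2 * L2_norm_sq e1
      + eps^4 / l^4 * L2_norm_sq (\<lambda>t. w\<^sup>2 / 4 * d t - w\<^sup>2 * e t)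
      \<le> 3 * (K * w * M / 4)\<^sup>2 + L2_norm_sq d"
    by (rule periodic_problem_estimate[OF d eps l w e(1,2) e_le' e1_le'])
  also have "\<dots> \<le> (K\<^sup>2 + 1 / c\<^sup>2) * (l\<^sup>2 / eps\<^sup>2) * L2_norm_sq d"
    unfolding M_def
    by (intro periodic_problem_constant_le eps l w c L1_norm_sq_le_L2_norm_sq L2_norm_sq_nonneg d)
  finally show ?thesis
    using sol' unique unfolding K_def by blast
qed

theorem proposition8p2:
  fixes c :: real
  assumes "c > 0"
  shows "\<exists>C::real. \<forall>eps l (d :: real \<Rightarrow> real).
    eps > 0 \<longrightarrow> l > 0 \<longrightarrow>
    (\<forall>j::nat. \<bar>(real j)^2 * eps^2 / l^2 - lambda_star\<bar> \<ge> c * eps / l) \<longrightarrow>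
    L2_on d \<longrightarrow>
    (\<exists>e e1 e2. periodic_sol eps l d e e1 e2 \<and>
       (\<forall>f f1 f2. periodic_sol eps l d f f1 f2 \<longrightarrow> (\<forall>x\<in>{0..2*pi}. f x = e x)) \<and>
       Linf_norm_sq e + eps^2 / l^2 * L2_norm_sq e1 + eps^4 / l^4 * L2_norm_sq e2
         \<le> C * (l^2 / eps^2) * L2_norm_sq d)"
proof -
  obtain \<beta> where \<beta>: "\<beta> > 0" and nonres: "\<And>w. w > 0 \<Longrightarrow>
      (\<And>j::nat. c * pi * w \<le> \<bar>(real j)\<^sup>2 - w\<^sup>2\<bar>) \<Longrightarrow> \<beta> \<le> 2 - 2 * cos (w * (2 * pi))"
    using nonresonance_cos_bound[OF assms] by blast
  show ?thesis
  proof (intro exI[of _ "(2 + 12 / \<beta>)\<^sup>2 + 1 / c\<^sup>2"] allI impI)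
    fix eps l :: real and d :: "real \<Rightarrow> real"
    assume eps: "eps > 0" and l: "l > 0" and d: "L2_on d"
      and hyp: "\<forall>j::nat. \<bar>(real j)^2 * eps^2 / l^2 - lambda_star\<bar> \<ge> c * eps / l"
    define w where "w = l / (pi * eps)"
    have w_pos: "w > 0" using eps l by (simp add: w_def)
    have far: "c * pi * w \<le> \<bar>(real j)\<^sup>2 - w\<^sup>2\<bar>" for j :: nat
      using hyp nonresonance_rescaled[OF eps l w_def] by blast
    from far[of 0] have "c * pi \<le> w"
      using w_pos by (simp add: power2_eq_square)
    with periodic_problem_well_posed[OF eps l d w_def \<beta> nonres[OF w_pos far] assms]
    show "\<exists>e e1 e2. periodic_sol eps l d e e1 e2 \<and>
       (\<forall>f f1 f2. periodic_sol eps l d f f1 f2 \<longrightarrow> (\<forall>x\<in>{0..2*pi}. f x = e x)) \<and>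
       Linf_norm_sq e + eps^2 / l^2 * L2_norm_sq e1 + eps^4 / l^4 * L2_norm_sq e2
         \<le> ((2 + 12 / \<beta>)\<^sup>2 + 1 / c\<^sup>2) * (l^2 / eps^2) * L2_norm_sq d" .
  qed
qed

end
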